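(* Fix $C<1$ and let $\delta=\delta(C)=C-1-\log C>0$. Fix $M>\frac{1}{\delta}$ and fix $\theta<\min(M\delta-1,1)$. Then there is a positive constant $L_1$ such that \[ \mathbb{P}\Big(\bigcap_{1\le j\le n}\{\#\mathcal{E}_j\le M\log n\}\Big)\ \ge\ 1-\frac{1}{n^{\theta}} \] for all $n\ge L_1$.
   Context: Let $C>0$ be a constant and $(\alpha_n)_{n\ge1}$ a sequence of nonnegative reals with $\alpha_n\to0$. For each $n$, consider the complete graph $K_n$ on vertex set $\{1,\dots,n\}$; each edge $e$ of $K_n$ is independently open with probability $p_n(e)$ and closed otherwise, where $\frac{C-\alpha_n}{n}\le p_n(e)\le\frac{C+\alpha_n}{n}$ for every edge $e$. Let $G$ be the resulting random graph of open edges, with probability measure $\mathbb{P}$. For a vertex $i$, $\mathcal{E}_i$ denotes the open component of $G$ containing $i$ (the set of vertices joined to $i$ by a path of open edges, together with $i$ itself), and $\#\mathcal{E}_i$ its number of vertices. $\log$ is the natural logarithm. *)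

theory Defs
  imports "HOL-Probability.Probability"
begin

definition edges_K :: "nat \<Rightarrow> nat set set" where
  "edges_K n = {{i, j} | i j. i \<in> {1..n} \<and> j \<in> {1..n} \<and> i \<noteq> j}"

text \<open>Random graph: each edge e of K_n is independently open (True) with probability q e.
  Edges outside K_n are set to False (irrelevant).\<close>
definition random_graph :: "nat \<Rightarrow> (nat set \<Rightarrow> real) \<Rightarrow> (nat set \<Rightarrow> bool) pmf" where
  "random_graph n q = Pi_pmf (edges_K n) False (\<lambda>e. bernoulli_pmf (q e))"

definition open_comp :: "nat \<Rightarrow> (nat set \<Rightarrow> bool) \<Rightarrow> nat \<Rightarrow> nat set" where
  "open_comp n G i =
     {j. (i, j) \<in> {(u, v). u \<in> {1..n} \<and> v \<in> {1..n} \<and> u \<noteq> v \<and> G {u, v}}\<^sup>*}"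

end

theory Submission
  imports Defs
begin

text \<open>Explore the component of a vertex set A one vertex a at a time: removing a from the
  vertex set and adding its open neighbours outside A to the frontier. The edges from a to the
  unexplored vertices are never looked at again, so with F = 1/c and \<lambda> = c - 1 - ln c an
  induction on the number of vertices gives E[exp(\<lambda> #reach(A))] \<le> F^#A, because each exposure
  multiplies by at most e^\<lambda> (1 + (c/n)(F - 1))^n \<le> e^(\<lambda> + 1 - c) = F. Chernoff's bound then gives
  P(#\<E> j > t) \<le> e^(-\<lambda> t)/c, and a union bound over the n vertices with t = M ln n leaves
  n^(1 - M\<lambda>)/c, which is eventually below n^(-\<theta>) since \<lambda> \<rightarrow> \<delta> when p \<le> (C + \<alpha> n)/n.\<close>

definition open_edge_rel :: "nat set \<Rightarrow> (nat set \<Rightarrow> bool) \<Rightarrow> (nat \<times> nat) set" where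
  "open_edge_rel V G = {(u, v). u \<in> V \<and> v \<in> V \<and> u \<noteq> v \<and> G {u, v}}"

definition open_reach :: "nat set \<Rightarrow> (nat set \<Rightarrow> bool) \<Rightarrow> nat set \<Rightarrow> nat set" where
  "open_reach V G A = (open_edge_rel V G)\<^sup>* `` A"

lemma open_comp_eq_open_reach: "open_comp n G j = open_reach {1..n} G {j}"
  by (auto simp: open_comp_def open_reach_def open_edge_rel_def)

lemma open_edge_rel_mono: "V' \<subseteq> V \<Longrightarrow> open_edge_rel V' G \<subseteq> open_edge_rel V G"
  by (auto simp: open_edge_rel_def)

lemma open_reach_subset:
  assumes "A \<subseteq> V"
  shows "open_reach V G A \<subseteq> V"
proof
  fix w assume "w \<in> open_reach V G A"
  then obtain a where "a \<in> A" and "(a, w) \<in> (open_edge_rel V G)\<^sup>*"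
    by (auto simp: open_reach_def)
  from this(2) show "w \<in> V"
    by (induction rule: rtrancl_induct) (use \<open>a \<in> A\<close> assms in \<open>auto simp: open_edge_rel_def\<close>)
qed

lemma open_reach_cong:
  assumes "\<And>u v. u \<in> V \<Longrightarrow> v \<in> V \<Longrightarrow> u \<noteq> v \<Longrightarrow> G {u, v} = H {u, v}"
  shows "open_reach V G A = open_reach V H A"
proof -
  have "open_edge_rel V G = open_edge_rel V H" using assms by (auto simp: open_edge_rel_def)
  then show ?thesis by (simp add: open_reach_def)
qed

lemma open_reach_explore_subset:
  assumes "a \<in> A"
  shows "open_reach V G A \<subseteq> insert a (open_reach (V - {a}) G ((A - {a}) \<union> {w \<in> V - A. G {a, w}}))"
    (is "_ \<subseteq> insert a (open_reach ?V' G ?A')")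
proof
  fix w assume "w \<in> open_reach V G A"
  then obtain b where "b \<in> A" and bw: "(b, w) \<in> (open_edge_rel V G)\<^sup>*"
    by (auto simp: open_reach_def)
  from bw show "w \<in> insert a (open_reach ?V' G ?A')"
  proof (induction rule: rtrancl_induct)
    case base
    then show ?case using \<open>b \<in> A\<close> by (cases "b = a") (auto simp: open_reach_def)
  next
    case (step y z)
    show ?case
    proof (cases "y = a")
      case True
      then have "z \<in> ?A'" using step(2) by (auto simp: open_edge_rel_def)
      then show ?thesis by (auto simp: open_reach_def)
    next
      case False
      then have y: "y \<in> open_reach ?V' G ?A'" using step(3) by auto
      have "(y, z) \<in> open_edge_rel ?V' G" if "z \<noteq> a"
        using step(2) that False by (auto simp: open_edge_rel_def)
      then show ?thesis
        using y by (cases "z = a") (auto simp: open_reach_def intro: rtrancl_into_rtrancl)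
    qed
  qed
qed

lemma open_reach_explore_supset:
  assumes "a \<in> A" "A \<subseteq> V"
  shows "insert a (open_reach (V - {a}) G ((A - {a}) \<union> {w \<in> V - A. G {a, w}})) \<subseteq> open_reach V G A"
    (is "insert a (open_reach ?V' G ?A') \<subseteq> _")
proof -
  have "?A' \<subseteq> open_reach V G A"
  proof
    fix b assume "b \<in> ?A'"
    then have "b \<in> A \<or> (a, b) \<in> open_edge_rel V G" using assms by (auto simp: open_edge_rel_def)
    then show "b \<in> open_reach V G A" using assms by (auto simp: open_reach_def)
  qed
  moreover have "(open_edge_rel ?V' G)\<^sup>* \<subseteq> (open_edge_rel V G)\<^sup>*"
    by (intro rtrancl_mono open_edge_rel_mono) blast
  ultimately have "open_reach ?V' G ?A' \<subseteq> open_reach V G A"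
    unfolding open_reach_def by (blast intro: rtrancl_trans)
  then show ?thesis using assms by (auto simp: open_reach_def)
qed

lemma card_open_reach_explore:
  assumes "a \<in> A" "A \<subseteq> V" "finite V"
    and agree: "\<And>u v. u \<in> V - {a} \<Longrightarrow> v \<in> V - {a} \<Longrightarrow> G {u, v} = H {u, v}"
  shows "card (open_reach V G A)
       = Suc (card (open_reach (V - {a}) H ((A - {a}) \<union> {w \<in> V - A. G {a, w}})))"
    (is "_ = Suc (card (open_reach ?V' H ?A'))")
proof -
  have "open_reach V G A = insert a (open_reach ?V' G ?A')"
    using open_reach_explore_subset[OF assms(1)] open_reach_explore_supset[OF assms(1,2)] by blast
  also have "open_reach ?V' G ?A' = open_reach ?V' H ?A'"
    using agree by (rule open_reach_cong)
  finally have "open_reach V G A = insert a (open_reach ?V' H ?A')" .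
  moreover have "open_reach ?V' H ?A' \<subseteq> ?V'"
    by (rule open_reach_subset) (use assms(1,2) in auto)
  then have "finite (open_reach ?V' H ?A')" "a \<notin> open_reach ?V' H ?A'"
    using \<open>finite V\<close> finite_subset by auto
  ultimately show ?thesis by simp
qed

lemma card_open_reach_expose_vertex:
  assumes "a \<in> A" "A \<subseteq> V" "finite V"
  defines "S \<equiv> (\<lambda>w. {a, w}) ` (V - A)"
  shows "card (open_reach V (\<lambda>e. if e \<in> S then g1 e else g2 e) A)
           = Suc (card (open_reach (V - {a}) g2 ((A - {a}) \<union> {w \<in> V - A. g1 {a, w}})))"
    and "card ((A - {a}) \<union> {w \<in> V - A. g1 {a, w}}) = (card A - 1) + card {e \<in> S. g1 e}"
proof -
  have "{w \<in> V - A. if {a, w} \<in> S then g1 {a, w} else g2 {a, w}} = {w \<in> V - A. g1 {a, w}}"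
    by (auto simp: S_def)
  moreover have "card (open_reach V (\<lambda>e. if e \<in> S then g1 e else g2 e) A) = Suc (card
      (open_reach (V - {a}) g2 ((A - {a}) \<union> {w \<in> V - A. if {a, w} \<in> S then g1 {a, w} else g2 {a, w}})))"
  proof (rule card_open_reach_explore[OF assms(1-3)])
    fix u v assume "u \<in> V - {a}" "v \<in> V - {a}"
    then have "{u, v} \<notin> S" by (auto simp: S_def doubleton_eq_iff)
    then show "(if {u, v} \<in> S then g1 {u, v} else g2 {u, v}) = g2 {u, v}" by simp
  qed
  ultimately show "card (open_reach V (\<lambda>e. if e \<in> S then g1 e else g2 e) A)
      = Suc (card (open_reach (V - {a}) g2 ((A - {a}) \<union> {w \<in> V - A. g1 {a, w}})))"
    by simp
next
  have inj: "inj_on (\<lambda>w. {a, w}) (V - A)"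
    using \<open>a \<in> A\<close> by (auto intro!: inj_onI simp: doubleton_eq_iff)
  have "card {w \<in> V - A. g1 {a, w}} = card ((\<lambda>w. {a, w}) ` {w \<in> V - A. g1 {a, w}})"
    by (intro card_image[symmetric] inj_on_subset[OF inj]) auto
  also have "(\<lambda>w. {a, w}) ` {w \<in> V - A. g1 {a, w}} = {e \<in> S. g1 e}"
    by (auto simp: S_def)
  finally show "card ((A - {a}) \<union> {w \<in> V - A. g1 {a, w}}) = (card A - 1) + card {e \<in> S. g1 e}"
    using assms(1-3) by (subst card_Un_disjoint) (auto intro: finite_subset)
qed

lemma nn_integral_Pi_pmf_split:
  assumes "finite E" "S \<subseteq> E"
  shows "(\<integral>\<^sup>+G. f G \<partial>Pi_pmf E d P) =
         (\<integral>\<^sup>+g1. \<integral>\<^sup>+g2. f (\<lambda>e. if e \<in> S then g1 e else g2 e) \<partial>Pi_pmf (E - S) d P \<partial>Pi_pmf S d P)"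
proof -
  have "Pi_pmf E d P = Pi_pmf (S \<union> (E - S)) d P"
    using assms(2) by (simp add: Un_absorb1)
  also have "\<dots> = map_pmf (\<lambda>(g1, g2) e. if e \<in> S then g1 e else g2 e)
                     (pair_pmf (Pi_pmf S d P) (Pi_pmf (E - S) d P))"
    by (rule Pi_pmf_union) (use assms in \<open>auto intro: finite_subset\<close>)
  finally show ?thesis by (simp add: nn_integral_pair_pmf')
qed

lemma nn_integral_bernoulli_pmf_if:
  assumes "0 \<le> q" "q \<le> 1" "1 \<le> F"
  shows "(\<integral>\<^sup>+b. ennreal (if b then F else 1) \<partial>bernoulli_pmf q) = ennreal (1 + q * (F - 1))"
proof -
  have "(\<integral>\<^sup>+b. ennreal (if b then F else 1) \<partial>bernoulli_pmf q) = ennreal F * ennreal q + ennreal (1 - q)"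
    using assms by (subst nn_integral_measure_pmf_support[of UNIV]) (simp_all add: UNIV_bool)
  also have "\<dots> = ennreal (1 + q * (F - 1))"
    using assms by (simp add: algebra_simps flip: ennreal_mult ennreal_plus)
  finally show ?thesis .
qed

lemma nn_integral_power_card_open_le:
  fixes q :: "'a \<Rightarrow> real"
  assumes "finite S" "1 \<le> F" and q: "\<And>e. e \<in> S \<Longrightarrow> 0 \<le> q e \<and> q e \<le> 1 \<and> q e \<le> \<beta>"
  shows "(\<integral>\<^sup>+g. ennreal (F ^ card {e \<in> S. g e}) \<partial>Pi_pmf S False (\<lambda>e. bernoulli_pmf (q e)))
         \<le> ennreal ((1 + \<beta> * (F - 1)) ^ card S)"
proof -
  have "ennreal (F ^ card {e \<in> S. g e}) = (\<Prod>e\<in>S. ennreal (if g e then F else 1))" for g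
  proof -
    have "F ^ card {e \<in> S. g e} = (\<Prod>e\<in>S. if g e then F else 1)"
      using \<open>finite S\<close> by (simp add: prod.If_cases Int_def conj_commute)
    then show ?thesis using \<open>1 \<le> F\<close> by (simp add: prod_ennreal)
  qed
  then have "(\<integral>\<^sup>+g. ennreal (F ^ card {e \<in> S. g e}) \<partial>Pi_pmf S False (\<lambda>e. bernoulli_pmf (q e)))
      = (\<Prod>e\<in>S. \<integral>\<^sup>+b. ennreal (if b then F else 1) \<partial>bernoulli_pmf (q e))"
    using nn_integral_prod_Pi_pmf[OF \<open>finite S\<close>] by simp
  also have "\<dots> = (\<Prod>e\<in>S. ennreal (1 + q e * (F - 1)))"
    using q \<open>1 \<le> F\<close> by (intro prod.cong refl nn_integral_bernoulli_pmf_if) auto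
  also have "\<dots> = ennreal (\<Prod>e\<in>S. 1 + q e * (F - 1))"
    using q \<open>1 \<le> F\<close> by (intro prod_ennreal) auto
  also have "\<dots> \<le> ennreal (\<Prod>e\<in>S. 1 + \<beta> * (F - 1))"
    using q \<open>1 \<le> F\<close> by (intro ennreal_leI prod_mono) (auto intro: mult_right_mono)
  finally show ?thesis by simp
qed

lemma nn_integral_Pi_pmf_expose_le:
  fixes q :: "'a \<Rightarrow> real"
  assumes "finite E" "S \<subseteq> E" "0 \<le> \<beta>" "1 \<le> F" "0 \<le> K"
    and q: "\<And>e. e \<in> S \<Longrightarrow> 0 \<le> q e \<and> q e \<le> 1 \<and> q e \<le> \<beta>"
    and exposed: "\<And>g1. (\<integral>\<^sup>+g2. f (\<lambda>e. if e \<in> S then g1 e else g2 e)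
                          \<partial>Pi_pmf (E - S) False (\<lambda>e. bernoulli_pmf (q e)))
                        \<le> ennreal (K * F ^ card {e \<in> S. g1 e})"
  shows "(\<integral>\<^sup>+G. f G \<partial>Pi_pmf E False (\<lambda>e. bernoulli_pmf (q e))) \<le> ennreal (K * (1 + \<beta> * (F - 1)) ^ card S)"
proof -
  let ?P = "\<lambda>E. Pi_pmf E False (\<lambda>e. bernoulli_pmf (q e))"
  have "finite S" using assms(1,2) by (rule finite_subset[rotated])
  have "(\<integral>\<^sup>+G. f G \<partial>?P E)
      = (\<integral>\<^sup>+g1. \<integral>\<^sup>+g2. f (\<lambda>e. if e \<in> S then g1 e else g2 e) \<partial>?P (E - S) \<partial>?P S)"
    by (rule nn_integral_Pi_pmf_split) fact+
  also have "\<dots> \<le> (\<integral>\<^sup>+g1. ennreal K * ennreal (F ^ card {e \<in> S. g1 e}) \<partial>?P S)"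
    using exposed \<open>0 \<le> K\<close> \<open>1 \<le> F\<close> by (intro nn_integral_mono) (simp add: ennreal_mult)
  also have "\<dots> = ennreal K * (\<integral>\<^sup>+g1. ennreal (F ^ card {e \<in> S. g1 e}) \<partial>?P S)"
    by (simp add: nn_integral_cmult)
  also have "\<dots> \<le> ennreal K * ennreal ((1 + \<beta> * (F - 1)) ^ card S)"
    using q \<open>finite S\<close> \<open>1 \<le> F\<close> by (intro mult_left_mono nn_integral_power_card_open_le) auto
  also have "\<dots> = ennreal (K * (1 + \<beta> * (F - 1)) ^ card S)"
    using assms(3-5) by (simp add: ennreal_mult)
  finally show ?thesis .
qed

lemma nn_integral_exp_card_open_reach_le:
  fixes q :: "nat set \<Rightarrow> real" and \<beta> F s :: real and m :: nat
  assumes "finite E" "finite V" "A \<subseteq> V"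
    and "\<And>u v. u \<in> V \<Longrightarrow> v \<in> V \<Longrightarrow> u \<noteq> v \<Longrightarrow> {u, v} \<in> E \<and> q {u, v} \<le> \<beta>"
    and "\<And>e. e \<in> E \<Longrightarrow> 0 \<le> q e \<and> q e \<le> 1"
    and "card V \<le> m" and "0 \<le> \<beta>" "1 \<le> F"
    and exposure_bound: "exp s * (1 + \<beta> * (F - 1)) ^ m \<le> F"
  shows "(\<integral>\<^sup>+G. ennreal (exp (s * card (open_reach V G A))) \<partial>Pi_pmf E False (\<lambda>e. bernoulli_pmf (q e)))
         \<le> ennreal (F ^ card A)"
  using assms(1-6)
proof (induction "card V" arbitrary: V A E rule: less_induct)
  case less
  let ?P = "\<lambda>E. Pi_pmf E False (\<lambda>e. bernoulli_pmf (q e))"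
  show ?case
  proof (cases "A = {}")
    case True
    then show ?thesis by (simp add: open_reach_def measure_pmf.emeasure_space_1)
  next
    case False
    then obtain a where "a \<in> A" by blast
    with less.prems have "a \<in> V" by auto
    define S where "S = (\<lambda>w. {a, w}) ` (V - A)"
    define A' where "A' = (\<lambda>g1. (A - {a}) \<union> {w \<in> V - A. g1 {a, w}})"
    have "S \<subseteq> E" using less.prems(4) \<open>a \<in> V\<close> \<open>a \<in> A\<close> by (auto simp: S_def)
    have not_in_S: "{u, v} \<notin> S" if "u \<in> V - {a}" "v \<in> V - {a}" for u v
      using that by (auto simp: S_def doubleton_eq_iff)
    have card_S: "card S \<le> m"
      using card_image_le[of "V - A" "\<lambda>w. {a, w}"] card_mono[of V "V - A"] less.prems(2,6)
      by (simp add: S_def)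
    note card_reach = card_open_reach_expose_vertex(1)[OF \<open>a \<in> A\<close> less.prems(3,2), folded S_def]
    note card_A' = card_open_reach_expose_vertex(2)[OF \<open>a \<in> A\<close> less.prems(3,2), folded S_def]
    have IH: "(\<integral>\<^sup>+g2. ennreal (exp (s * card (open_reach (V - {a}) g2 (A' g1)))) \<partial>?P (E - S))
        \<le> ennreal (F ^ card (A' g1))" for g1
      using less.prems \<open>a \<in> V\<close> \<open>a \<in> A\<close> not_in_S card_Diff1_less[OF less.prems(2) \<open>a \<in> V\<close>]
      by (intro less.hyps) (auto simp: A'_def)
    have exposed: "(\<integral>\<^sup>+g2. ennreal (exp (s * card (open_reach V (\<lambda>e. if e \<in> S then g1 e else g2 e) A))) \<partial>?P (E - S))
        \<le> ennreal (exp s * F ^ (card A - 1) * F ^ card {e \<in> S. g1 e})" for g1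
    proof -
      have "(\<integral>\<^sup>+g2. ennreal (exp (s * card (open_reach V (\<lambda>e. if e \<in> S then g1 e else g2 e) A))) \<partial>?P (E - S))
          = ennreal (exp s) * (\<integral>\<^sup>+g2. ennreal (exp (s * card (open_reach (V - {a}) g2 (A' g1)))) \<partial>?P (E - S))"
        by (simp add: card_reach A'_def distrib_left exp_add ennreal_mult nn_integral_cmult)
      also have "\<dots> \<le> ennreal (exp s) * ennreal (F ^ card (A' g1))"
        by (intro mult_left_mono IH) simp
      also have "\<dots> = ennreal (exp s * F ^ (card A - 1) * F ^ card {e \<in> S. g1 e})"
        using \<open>1 \<le> F\<close> unfolding A'_def card_A' by (simp add: power_add mult.assoc flip: ennreal_mult)
      finally show ?thesis .
    qed
    have "(1 + \<beta> * (F - 1)) ^ card S \<le> (1 + \<beta> * (F - 1)) ^ m"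
      using card_S \<open>0 \<le> \<beta>\<close> \<open>1 \<le> F\<close> by (intro power_increasing) auto
    then have "exp s * (1 + \<beta> * (F - 1)) ^ card S \<le> F"
      using exposure_bound by (meson exp_ge_zero mult_left_mono order_trans)
    then have "exp s * F ^ (card A - 1) * (1 + \<beta> * (F - 1)) ^ card S \<le> F ^ (card A - 1) * F"
      using \<open>1 \<le> F\<close> by (simp add: mult.left_commute mult_left_mono)
    also have "F ^ (card A - 1) * F = F ^ card A"
      using \<open>A \<noteq> {}\<close> less.prems(2,3) finite_subset
      by (metis card_gt_0_iff power_minus_mult)
    finally have real_bound: "exp s * F ^ (card A - 1) * (1 + \<beta> * (F - 1)) ^ card S \<le> F ^ card A" .
    have "(\<integral>\<^sup>+G. ennreal (exp (s * card (open_reach V G A))) \<partial>?P E)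
        \<le> ennreal (exp s * F ^ (card A - 1) * (1 + \<beta> * (F - 1)) ^ card S)"
    proof (rule nn_integral_Pi_pmf_expose_le[OF less.prems(1) \<open>S \<subseteq> E\<close> \<open>0 \<le> \<beta>\<close> \<open>1 \<le> F\<close> _ _ exposed])
      fix e assume "e \<in> S"
      then show "0 \<le> q e \<and> q e \<le> 1 \<and> q e \<le> \<beta>"
        using less.prems(4,5) \<open>S \<subseteq> E\<close> \<open>a \<in> V\<close> \<open>a \<in> A\<close> by (auto simp: S_def)
    qed (use \<open>1 \<le> F\<close> in simp)
    also have "\<dots> \<le> ennreal (F ^ card A)"
      using real_bound by (rule ennreal_leI)
    finally show ?thesis .
  qed
qed

lemma finite_edges_K: "finite (edges_K n)"
  by (rule finite_subset[of _ "Pow {1..n}"]) (auto simp: edges_K_def)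

lemma nn_integral_exp_card_open_comp_le:
  fixes p :: "nat set \<Rightarrow> real" and c :: real
  assumes "j \<in> {1..n}" "0 < c" "c < 1"
    and p: "\<And>e. e \<in> edges_K n \<Longrightarrow> 0 \<le> p e \<and> p e \<le> 1 \<and> p e \<le> c / real n"
  shows "(\<integral>\<^sup>+G. ennreal (exp ((c - 1 - ln c) * card (open_comp n G j))) \<partial>random_graph n p)
         \<le> ennreal (1 / c)"
proof -
  have "0 < real n" using assms(1) by simp
  have "1 + c / real n * (1 / c - 1) = 1 + (1 - c) / real n"
    using \<open>0 < c\<close> \<open>0 < real n\<close> by (simp add: field_simps)
  then have "(1 + c / real n * (1 / c - 1)) ^ n = (1 + (1 - c) / real n) ^ n"
    by (simp only:)
  also have "\<dots> \<le> exp ((1 - c) / real n) ^ n"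
    using \<open>c < 1\<close> \<open>0 < real n\<close> by (intro power_mono exp_ge_add_one_self) simp
  also have "\<dots> = exp (1 - c)"
    using \<open>0 < real n\<close> by (simp flip: exp_of_nat_mult)
  finally have "exp (c - 1 - ln c) * (1 + c / real n * (1 / c - 1)) ^ n \<le> exp (c - 1 - ln c) * exp (1 - c)"
    by (intro mult_left_mono) auto
  also have "\<dots> = 1 / c"
    using \<open>0 < c\<close> by (simp add: exp_minus field_simps flip: exp_add)
  finally have exposure_bound: "exp (c - 1 - ln c) * (1 + c / real n * (1 / c - 1)) ^ n \<le> 1 / c" .
  have "(\<integral>\<^sup>+G. ennreal (exp ((c - 1 - ln c) * card (open_reach {1..n} G {j})))
           \<partial>Pi_pmf (edges_K n) False (\<lambda>e. bernoulli_pmf (p e))) \<le> ennreal ((1 / c) ^ card {j})"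
  proof (rule nn_integral_exp_card_open_reach_le[OF finite_edges_K _ _ _ _ _ _ _ exposure_bound])
    fix u v assume "u \<in> {1..n}" "v \<in> {1..n}" "u \<noteq> v"
    then have "{u, v} \<in> edges_K n" by (auto simp: edges_K_def)
    then show "{u, v} \<in> edges_K n \<and> p {u, v} \<le> c / real n" using p by blast
  qed (use assms p in auto)
  then show ?thesis by (simp add: random_graph_def open_comp_eq_open_reach)
qed

lemma prob_card_open_comp_gt_le:
  fixes p :: "nat set \<Rightarrow> real" and c t :: real
  assumes "j \<in> {1..n}" "0 < c" "c < 1"
    and "\<And>e. e \<in> edges_K n \<Longrightarrow> 0 \<le> p e \<and> p e \<le> 1 \<and> p e \<le> c / real n"
  shows "measure_pmf.prob (random_graph n p) {G. t < real (card (open_comp n G j))}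
         \<le> exp (- (c - 1 - ln c) * t) / c"
proof -
  define s where "s = c - 1 - ln c"
  have "ln c \<noteq> c - 1"
    using ln_eq_minus_one[of c] assms(2,3) by auto
  then have "s > 0"
    using ln_le_minus_one[of c] assms(2) by (simp add: s_def)
  have "emeasure (random_graph n p) {G. t < real (card (open_comp n G j))}
      \<le> emeasure (random_graph n p) {G \<in> UNIV. real (card (open_comp n G j)) \<ge> t}"
    by (intro emeasure_mono) auto
  also have "\<dots> \<le> ennreal (exp (- s * t))
      * (\<integral>\<^sup>+G. ennreal (exp (s * card (open_comp n G j))) * indicator UNIV G \<partial>random_graph n p)"
    using \<open>s > 0\<close> by (intro Chernoff_ineq_nn_integral_ge) auto
  also have "\<dots> \<le> ennreal (exp (- s * t)) * ennreal (1 / c)"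
    using nn_integral_exp_card_open_comp_le[OF assms] by (intro mult_left_mono) (auto simp: s_def)
  also have "\<dots> = ennreal (exp (- s * t) / c)"
    using \<open>0 < c\<close> by (simp flip: ennreal_mult)
  finally show ?thesis
    using \<open>0 < c\<close> by (simp add: measure_pmf.emeasure_eq_measure s_def)
qed

lemma prob_all_open_comp_card_le:
  fixes p :: "nat set \<Rightarrow> real" and c t :: real
  assumes "0 < c" "c < 1"
    and "\<And>e. e \<in> edges_K n \<Longrightarrow> 0 \<le> p e \<and> p e \<le> 1 \<and> p e \<le> c / real n"
  shows "measure_pmf.prob (random_graph n p) {G. \<forall>j \<in> {1..n}. real (card (open_comp n G j)) \<le> t}
         \<ge> 1 - real n * exp (- (c - 1 - ln c) * t) / c"
proof -
  let ?P = "measure_pmf.prob (random_graph n p)"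
  define bad where "bad = (\<Union>j\<in>{1..n}. {G. t < real (card (open_comp n G j))})"
  have "?P bad \<le> (\<Sum>j\<in>{1..n}. ?P {G. t < real (card (open_comp n G j))})"
    unfolding bad_def by (rule measure_pmf.finite_measure_subadditive_finite) auto
  also have "\<dots> \<le> (\<Sum>j\<in>{1..n}. exp (- (c - 1 - ln c) * t) / c)"
    using assms by (intro sum_mono prob_card_open_comp_gt_le) auto
  finally have "?P bad \<le> real n * exp (- (c - 1 - ln c) * t) / c" by simp
  moreover have "{G. \<forall>j \<in> {1..n}. real (card (open_comp n G j)) \<le> t} = UNIV - bad"
    by (auto simp: bad_def not_less)
  ultimately show ?thesis
    using measure_pmf.prob_compl[of bad "random_graph n p"] by simp
qed

lemma eventually_union_bound_le_powr:
  fixes c :: "nat \<Rightarrow> real" and C M \<theta> :: real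
  assumes c_lim: "c \<longlonglongrightarrow> C" and "0 < C" and \<theta>: "\<theta> < M * (C - 1 - ln C) - 1"
  shows "eventually (\<lambda>n. real n * exp (- (c n - 1 - ln (c n)) * (M * ln (real n))) / c n
           \<le> 1 / real n powr \<theta>) sequentially"
proof -
  define \<epsilon> where "\<epsilon> = (M * (C - 1 - ln C) - 1 - \<theta>) / 2"
  have "\<epsilon> > 0" using \<theta> by (simp add: \<epsilon>_def)
  have "(\<lambda>n. (c n - 1 - ln (c n)) * M) \<longlonglongrightarrow> (C - 1 - ln C) * M"
    using \<open>0 < C\<close> by (intro tendsto_intros c_lim) auto
  then have ev_rate: "eventually (\<lambda>n. 1 + \<theta> + \<epsilon> < (c n - 1 - ln (c n)) * M) sequentially"
    by (rule order_tendstoD) (use \<theta> in \<open>simp add: \<epsilon>_def field_simps\<close>)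
  have ev_c: "eventually (\<lambda>n. C / 2 < c n) sequentially"
    using \<open>0 < C\<close> by (intro order_tendstoD(1)[OF c_lim]) simp
  have "(\<lambda>n. 2 / C * real n powr (- \<epsilon>)) \<longlonglongrightarrow> 2 / C * 0"
    using \<open>\<epsilon> > 0\<close>
    by (intro tendsto_mult tendsto_const tendsto_neg_powr filterlim_real_sequentially) simp
  then have ev_n: "eventually (\<lambda>n. 2 / C * real n powr (- \<epsilon>) < 1) sequentially"
    by (rule order_tendstoD) simp
  show ?thesis
    using ev_rate ev_c ev_n eventually_gt_at_top[of 0]
  proof eventually_elim
    case (elim n)
    then have "0 < real n" "C / 2 < c n" by auto
    have "exp (- (c n - 1 - ln (c n)) * (M * ln (real n))) = real n powr (- ((c n - 1 - ln (c n)) * M))"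
      using \<open>0 < real n\<close> by (simp add: powr_def algebra_simps)
    also have "\<dots> \<le> real n powr (- (1 + \<theta> + \<epsilon>))"
      using elim(1) \<open>0 < real n\<close> by (intro powr_mono) auto
    finally have "real n * exp (- (c n - 1 - ln (c n)) * (M * ln (real n))) / c n
        \<le> real n * real n powr (- (1 + \<theta> + \<epsilon>)) / c n"
      using \<open>0 < C\<close> \<open>C / 2 < c n\<close> by (intro divide_right_mono mult_left_mono) auto
    also have "\<dots> \<le> real n * real n powr (- (1 + \<theta> + \<epsilon>)) / (C / 2)"
      using \<open>0 < C\<close> \<open>C / 2 < c n\<close> by (intro divide_left_mono) auto
    also have "\<dots> = 2 / C * real n powr (- \<epsilon>) * real n powr (- \<theta>)"
      using \<open>0 < real n\<close> by (simp add: powr_mult_base add.commute flip: powr_add)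
    also have "\<dots> \<le> 1 * real n powr (- \<theta>)"
      using elim(3) by (intro mult_right_mono) auto
    finally show ?case by (simp add: powr_minus_divide)
  qed
qed

theorem theorem1:
  fixes C M \<theta> :: real and \<alpha> :: "nat \<Rightarrow> real" and p :: "nat \<Rightarrow> nat set \<Rightarrow> real"
  assumes C_pos: "0 < C" and C_lt1: "C < 1"
    and alpha_nonneg: "\<And>n. 0 \<le> \<alpha> n"
    and alpha_lim: "\<alpha> \<longlonglongrightarrow> 0"
    and p_prob: "\<And>n e. e \<in> edges_K n \<Longrightarrow> 0 \<le> p n e \<and> p n e \<le> 1"
    and p_lower: "\<And>n e. e \<in> edges_K n \<Longrightarrow> (C - \<alpha> n) / real n \<le> p n e"
    and p_upper: "\<And>n e. e \<in> edges_K n \<Longrightarrow> p n e \<le> (C + \<alpha> n) / real n"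
    and M_gt: "M > 1 / (C - 1 - ln C)"
    and theta_lt: "\<theta> < min (M * (C - 1 - ln C) - 1) 1"
  shows "\<exists>L1 > 0. \<forall>n. real n \<ge> L1 \<longrightarrow>
           measure_pmf.prob (random_graph n (p n))
             {G. \<forall>j \<in> {1..n}. real (card (open_comp n G j)) \<le> M * ln (real n)}
           \<ge> 1 - 1 / (real n powr \<theta>)"
proof -
  define c where "c = (\<lambda>n. C + \<alpha> n)"
  have c_lim: "c \<longlonglongrightarrow> C"
    using tendsto_add[OF tendsto_const alpha_lim, of C] by (simp add: c_def)
  have "eventually (\<lambda>n. c n < 1) sequentially"
    by (rule order_tendstoD(2)[OF c_lim C_lt1])
  moreover have "eventually (\<lambda>n. real n * exp (- (c n - 1 - ln (c n)) * (M * ln (real n))) / c n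
      \<le> 1 / real n powr \<theta>) sequentially"
    using theta_lt by (intro eventually_union_bound_le_powr[OF c_lim C_pos]) simp
  ultimately have "eventually (\<lambda>n. c n < 1 \<and>
      real n * exp (- (c n - 1 - ln (c n)) * (M * ln (real n))) / c n \<le> 1 / real n powr \<theta>) sequentially"
    by (rule eventually_conj)
  then obtain N where N: "\<And>n. n \<ge> N \<Longrightarrow> c n < 1 \<and>
      real n * exp (- (c n - 1 - ln (c n)) * (M * ln (real n))) / c n \<le> 1 / real n powr \<theta>"
    unfolding eventually_sequentially by blast
  show ?thesis
  proof (intro exI[of _ "real N + 1"] conjI allI impI)
    fix n assume "real N + 1 \<le> real n"
    then have "c n < 1" and bound: "real n * exp (- (c n - 1 - ln (c n)) * (M * ln (real n))) / c n
        \<le> 1 / real n powr \<theta>" using N[of n] by auto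
    have "1 - real n * exp (- (c n - 1 - ln (c n)) * (M * ln (real n))) / c n
        \<le> measure_pmf.prob (random_graph n (p n))
             {G. \<forall>j \<in> {1..n}. real (card (open_comp n G j)) \<le> M * ln (real n)}"
    proof (rule prob_all_open_comp_card_le[OF _ \<open>c n < 1\<close>])
      show "0 < c n" using C_pos alpha_nonneg[of n] by (simp add: c_def)
      show "\<And>e. e \<in> edges_K n \<Longrightarrow> 0 \<le> p n e \<and> p n e \<le> 1 \<and> p n e \<le> c n / real n"
        using p_prob p_upper by (simp add: c_def)
    qed
    with bound show "1 - 1 / real n powr \<theta> \<le> measure_pmf.prob (random_graph n (p n))
        {G. \<forall>j \<in> {1..n}. real (card (open_comp n G j)) \<le> M * ln (real n)}"
      by linarith
  qed simp
qed

end
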